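(* For $J,J'\subseteq[n-1]$, we have $X_J\cap\Omega_{J'}\neq\emptyset$ if and only if $J\supseteq J'$. Moreover, $X_J\cap\Omega_J=\{w_J\}$ (the permutation flag of $w_J$).
   Context: Let $n\ge2$, $[n-1]=\{1,\dots,n-1\}$. $Fl_n$ is the variety of full flags $V_\bullet=(V_1\subset\cdots\subset V_n=\mathbb C^n)$, $\dim V_i=i$, identified with $GL_n(\mathbb C)/B$ ($B$ = upper triangular matrices). A permutation $w\in\mathfrak S_n$ is identified with the flag $V_i=\langle e_{w(1)},\dots,e_{w(i)}\rangle$. $X_w=\overline{BwB/B}$ is the Schubert variety and $\Omega_w=\overline{B^-wB/B}$ the dual Schubert variety ($B^-$ = lower triangular matrices). $N$ is the $n\times n$ nilpotent Jordan block ($Ne_1=0$, $Ne_i=e_{i-1}$ for $i\ge2$). The Peterson variety is $\mathrm{Pet}_n=\{V_\bullet\in Fl_n: NV_i\subseteq V_{i+1},\ 1\le i\le n-1\}$. For $J\subseteq[n-1]$, $w_J$ is the longest element of the subgroup of $\mathfrak S_n$ generated by the simple transpositions $s_i$, $i\in J$ (equivalently the product of the longest elements of the subgroups attached to the maximal intervals of consecutive integers of $J$). Set $X_J=X_{w_J}\cap\mathrm{Pet}_n$ and $\Omega_J=\Omega_{w_J}\cap\mathrm{Pet}_n$. *)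

theory Defs
  imports "HOL-Analysis.Analysis"
begin

text \<open>Conventions: n x n complex matrices are functions nat => nat => complex,
  vanishing outside {0..<n} x {0..<n}; the standard basis vector e_(k+1) of the
  paper is index k here (0-indexed). Matrices carry the product topology
  (= the usual topology on C^(n x n), since entries outside the range are 0).\<close>

type_synonym cmat = "nat \<Rightarrow> nat \<Rightarrow> complex"
type_synonym cvec = "nat \<Rightarrow> complex"

definition matrices :: "nat \<Rightarrow> cmat set" where
  "matrices n = {A. \<forall>i j. \<not> (i < n \<and> j < n) \<longrightarrow> A i j = 0}"

definition mmul :: "nat \<Rightarrow> cmat \<Rightarrow> cmat \<Rightarrow> cmat" where
  "mmul n A C = (\<lambda>i j. if i < n \<and> j < n then (\<Sum>k<n. A i k * C k j) else 0)"

definition idm :: "nat \<Rightarrow> cmat" where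
  "idm n = (\<lambda>i j. if i < n \<and> j < n \<and> i = j then 1 else 0)"

definition GL :: "nat \<Rightarrow> cmat set" where
  "GL n = {A \<in> matrices n. \<exists>C \<in> matrices n. mmul n A C = idm n \<and> mmul n C A = idm n}"

definition Bup :: "nat \<Rightarrow> cmat set" where
  "Bup n = {A \<in> GL n. \<forall>i j. j < i \<longrightarrow> A i j = 0}"

definition Blow :: "nat \<Rightarrow> cmat set" where
  "Blow n = {A \<in> GL n. \<forall>i j. i < j \<longrightarrow> A i j = 0}"

definition permmat :: "nat \<Rightarrow> (nat \<Rightarrow> nat) \<Rightarrow> cmat" where
  "permmat n w = (\<lambda>i j. if i < n \<and> j < n \<and> i = w j then 1 else 0)"

definition dcoset :: "nat \<Rightarrow> cmat set \<Rightarrow> (nat \<Rightarrow> nat) \<Rightarrow> cmat set" where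
  "dcoset n H w = {mmul n (mmul n b (permmat n w)) b' | b b'. b \<in> H \<and> b' \<in> Bup n}"

definition colspan :: "nat \<Rightarrow> cmat \<Rightarrow> nat \<Rightarrow> cvec set" where
  "colspan n g k = {v. \<exists>c :: nat \<Rightarrow> complex. v = (\<lambda>i. \<Sum>j<k. c j * g i j)}"

definition flag_of :: "nat \<Rightarrow> cmat \<Rightarrow> nat \<Rightarrow> cvec set" where
  "flag_of n g = (\<lambda>k. if k \<le> n then colspan n g k else {})"

definition Fl :: "nat \<Rightarrow> (nat \<Rightarrow> cvec set) set" where
  "Fl n = flag_of n ` GL n"

definition flag_top :: "nat \<Rightarrow> (nat \<Rightarrow> cvec set) topology" where
  "flag_top n = topology (\<lambda>U. U \<subseteq> Fl n \<and>
      openin (top_of_set (GL n)) {g \<in> GL n. flag_of n g \<in> U})"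

definition perm_flag :: "nat \<Rightarrow> (nat \<Rightarrow> nat) \<Rightarrow> nat \<Rightarrow> cvec set" where
  "perm_flag n w = flag_of n (permmat n w)"

definition Schubert :: "nat \<Rightarrow> (nat \<Rightarrow> nat) \<Rightarrow> (nat \<Rightarrow> cvec set) set" where
  "Schubert n w = flag_top n closure_of (flag_of n ` dcoset n (Bup n) w)"

definition dualSchubert :: "nat \<Rightarrow> (nat \<Rightarrow> nat) \<Rightarrow> (nat \<Rightarrow> cvec set) set" where
  "dualSchubert n w = flag_top n closure_of (flag_of n ` dcoset n (Blow n) w)"

text \<open>Nilpotent Jordan block: N e_1 = 0, N e_i = e_(i-1); 0-indexed (N v)_i = v_(i+1).\<close>
definition Nop :: "nat \<Rightarrow> cvec \<Rightarrow> cvec" where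
  "Nop n v = (\<lambda>i. if i + 1 < n then v (i + 1) else 0)"

definition Pet :: "nat \<Rightarrow> (nat \<Rightarrow> cvec set) set" where
  "Pet n = {F \<in> Fl n. \<forall>i \<in> {1..n-1}. Nop n ` F i \<subseteq> F (Suc i)}"

text \<open>w_J for J a subset of {1..n-1}: product of the longest elements of the
  parabolic subgroups of the maximal intervals of J, i.e. it reverses each
  maximal block of positions a..b (0-indexed) with s_(a+1),...,s_b in J
  (s_i swaps the 0-indexed positions i-1 and i).\<close>
definition wJ :: "nat \<Rightarrow> nat set \<Rightarrow> nat \<Rightarrow> nat" where
  "wJ n J k = (if k < n then
      (LEAST a. a \<le> k \<and> {a<..k} \<subseteq> J) + (GREATEST b. k \<le> b \<and> b < n \<and> {k<..b} \<subseteq> J) - k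
    else k)"

definition XJ :: "nat \<Rightarrow> nat set \<Rightarrow> (nat \<Rightarrow> cvec set) set" where
  "XJ n J = Schubert n (wJ n J) \<inter> Pet n"

definition OmegaJ :: "nat \<Rightarrow> nat set \<Rightarrow> (nat \<Rightarrow> cvec set) set" where
  "OmegaJ n J = dualSchubert n (wJ n J) \<inter> Pet n"

end

theory Submission
  imports Defs "Jordan_Normal_Form.Determinant" "HOL-Combinatorics.Permutations"
begin

text \<open>Both Schubert varieties are replaced by closed conditions that can be checked on a
  representative matrix. A flag in \<open>X\<^sub>w\<^sub>J\<close> has \<open>V\<^sub>c = \<langle>e\<^sub>1, \<dots>, e\<^sub>c\<rangle>\<close> at every cut \<open>c \<notin> J\<close>
  (\<open>std_at_cuts\<close>), and a flag in \<open>\<Omega>\<^sub>w\<close> has in each \<open>V\<^sub>j\<close> a nonzero vector supported on the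
  coordinates \<open>\<ge> w(j)\<close> (\<open>meets_opposite\<close>); the latter set is closed because the
  coefficients of that vector can be normalized to a compact set.

  If \<open>c \<in> J' - J\<close>, some position \<open>l < c\<close> is moved by \<open>w\<^sub>J\<^sub>'\<close> to \<open>w\<^sub>J\<^sub>'(l) \<ge> c\<close>, and the two
  conditions clash at \<open>V\<^sub>c\<close>. For a Peterson flag satisfying both conditions with \<open>J' = J\<close>, the
  vector at the start of each block of \<open>w\<^sub>J\<close> is forced to be a coordinate vector, and
  \<open>N V\<^sub>j \<subseteq> V\<^sub>j\<^sub>+\<^sub>1\<close> propagates this through the block, so the flag is the permutation flag of
  \<open>w\<^sub>J\<close>. Conversely, for \<open>J' \<subseteq> J\<close> the permutation \<open>w\<^sub>J\<^sub>'\<close> is reached from \<open>w\<^sub>J\<close> by removing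
  adjacent inversions one at a time; each step is the limit at \<open>s = 0\<close> of a path lying in
  \<open>B w B\<close> for \<open>s \<noteq> 0\<close>, so the permutation flag of \<open>w\<^sub>J\<^sub>'\<close> lies in \<open>X\<^sub>w\<^sub>J\<close>.\<close>

definition mcol :: "cmat \<Rightarrow> nat \<Rightarrow> cvec" where
  "mcol g j = (\<lambda>i. g i j)"

definition basis_vec :: "nat \<Rightarrow> cvec" where
  "basis_vec m = (\<lambda>i. if i = m then 1 else 0)"

lemma mmul_assoc: "mmul n (mmul n A B) C = mmul n A (mmul n B C)"
proof (intro ext)
  fix i j
  show "mmul n (mmul n A B) C i j = mmul n A (mmul n B C) i j"
  proof (cases "i < n \<and> j < n")
    case True
    have "(\<Sum>l<n. (\<Sum>k<n. A i k * B k l) * C l j) = (\<Sum>l<n. \<Sum>k<n. A i k * B k l * C l j)"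
      by (simp add: sum_distrib_right)
    also have "\<dots> = (\<Sum>k<n. \<Sum>l<n. A i k * B k l * C l j)" by (rule sum.swap)
    also have "\<dots> = (\<Sum>k<n. A i k * (\<Sum>l<n. B k l * C l j))"
      by (simp add: sum_distrib_left mult.assoc)
    finally show ?thesis
      using True by (auto simp: mmul_def intro!: sum.cong)
  qed (auto simp: mmul_def)
qed

lemma mmul_matrices [simp]: "mmul n A B \<in> matrices n"
  by (simp add: mmul_def matrices_def)

lemma idm_matrices [simp]: "idm n \<in> matrices n"
  by (simp add: idm_def matrices_def)

lemma mmul_idm_left: "A \<in> matrices n \<Longrightarrow> mmul n (idm n) A = A"
proof (intro ext)
  fix i j assume A: "A \<in> matrices n"
  show "mmul n (idm n) A i j = A i j"
  proof (cases "i < n \<and> j < n")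
    case True
    have "(\<Sum>k<n. idm n i k * A k j) = (\<Sum>k<n. if k = i then A k j else 0)"
      using True by (intro sum.cong) (auto simp: idm_def)
    then show ?thesis using True by (simp add: mmul_def)
  qed (use A in \<open>auto simp: mmul_def matrices_def\<close>)
qed

lemma mmul_idm_right: "A \<in> matrices n \<Longrightarrow> mmul n A (idm n) = A"
proof (intro ext)
  fix i j assume A: "A \<in> matrices n"
  show "mmul n A (idm n) i j = A i j"
  proof (cases "i < n \<and> j < n")
    case True
    have "(\<Sum>k<n. A i k * idm n k j) = (\<Sum>k<n. if k = j then A i k else 0)"
      using True by (intro sum.cong) (auto simp: idm_def)
    then show ?thesis using True by (simp add: mmul_def)
  qed (use A in \<open>auto simp: mmul_def matrices_def\<close>)
qed

lemma GL_matrices: "A \<in> GL n \<Longrightarrow> A \<in> matrices n"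
  by (simp add: GL_def)

lemma GL_left_inverse:
  assumes "A \<in> GL n"
  obtains A' where "mmul n A' A = idm n"
  using assms by (auto simp: GL_def)

lemma idm_GL [simp]: "idm n \<in> GL n"
  unfolding GL_def by (auto intro!: bexI[of _ "idm n"] simp: mmul_idm_left)

lemma GL_mmul:
  assumes "A \<in> GL n" "B \<in> GL n"
  shows "mmul n A B \<in> GL n"
proof -
  obtain A' where A': "A' \<in> matrices n" "mmul n A A' = idm n" "mmul n A' A = idm n"
    using assms(1) by (auto simp: GL_def)
  obtain B' where B': "B' \<in> matrices n" "mmul n B B' = idm n" "mmul n B' B = idm n"
    using assms(2) by (auto simp: GL_def)
  have "mmul n (mmul n A B) (mmul n B' A') = mmul n A (mmul n (mmul n B B') A')"
    by (simp add: mmul_assoc)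
  also have "\<dots> = idm n" using A' B' by (simp add: mmul_idm_left)
  finally have "mmul n (mmul n A B) (mmul n B' A') = idm n" .
  moreover have "mmul n (mmul n B' A') (mmul n A B) = mmul n B' (mmul n (mmul n A' A) B)"
    by (simp add: mmul_assoc)
  then have "mmul n (mmul n B' A') (mmul n A B) = idm n"
    using assms(2) A' B' by (simp add: mmul_idm_left GL_matrices)
  ultimately show ?thesis
    unfolding GL_def by (auto intro!: bexI[of _ "mmul n B' A'"])
qed

lemma Bup_mmul:
  assumes "A \<in> Bup n" "B \<in> Bup n"
  shows "mmul n A B \<in> Bup n"
proof -
  have "mmul n A B i j = 0" if "j < i" for i j
  proof -
    have "A i k * B k j = 0" for k
      using assms that by (cases "k < i") (auto simp: Bup_def)
    then show ?thesis unfolding mmul_def by (simp only:) simp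
  qed
  then show ?thesis using assms by (auto simp: Bup_def intro: GL_mmul)
qed

lemma idm_Bup [simp]: "idm n \<in> Bup n"
  and idm_Blow [simp]: "idm n \<in> Blow n"
  by (auto simp: Bup_def Blow_def) (auto simp: idm_def)

lemma GL_mcol_nonzero:
  assumes "A \<in> GL n" "j < n"
  shows "mcol A j \<noteq> (\<lambda>i. 0)"
proof
  assume "mcol A j = (\<lambda>i. 0)"
  obtain A' where "mmul n A' A = idm n" using assms(1) by (rule GL_left_inverse)
  then have "1 = mmul n A' A j j"
    using assms(2) by (simp add: idm_def)
  also have "\<dots> = (\<Sum>m<n. A' j m * A m j)"
    using assms(2) by (simp add: mmul_def)
  also have "\<dots> = 0" using \<open>mcol A j = (\<lambda>i. 0)\<close> by (simp add: mcol_def fun_eq_iff)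
  finally show False by simp
qed

lemma GL_combination_eq_0:
  assumes A: "A \<in> GL n" and c: "\<And>l. n \<le> l \<Longrightarrow> c l = 0"
    and z: "\<And>i. (\<Sum>l<n. c l * A i l) = 0"
  shows "c l0 = 0"
proof (cases "l0 < n")
  case True
  obtain A' where A': "mmul n A' A = idm n" using A by (rule GL_left_inverse)
  have "0 = (\<Sum>i<n. A' l0 i * (\<Sum>l<n. c l * A i l))" using z by simp
  also have "\<dots> = (\<Sum>i<n. \<Sum>l<n. c l * (A' l0 i * A i l))"
    by (simp add: sum_distrib_left ac_simps)
  also have "\<dots> = (\<Sum>l<n. c l * (\<Sum>i<n. A' l0 i * A i l))"
    by (subst sum.swap) (simp add: sum_distrib_left)
  also have "\<dots> = (\<Sum>l<n. c l * idm n l0 l)"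
    using True by (intro sum.cong refl) (simp flip: A' add: mmul_def)
  also have "\<dots> = c l0"
    using True by (simp add: idm_def if_distrib cong: if_cong)
  finally show ?thesis by simp
qed (use c in simp)

lemma colspan_sum:
  assumes "finite A" "\<And>a. a \<in> A \<Longrightarrow> x a \<in> colspan n g k"
  shows "(\<lambda>i. \<Sum>a\<in>A. d a * x a i) \<in> colspan n g k"
proof -
  have "\<forall>a\<in>A. \<exists>c. x a = (\<lambda>i. \<Sum>j<k. c j * g i j)"
    using assms(2) by (auto simp: colspan_def)
  then obtain c where c: "\<And>a. a \<in> A \<Longrightarrow> x a = (\<lambda>i. \<Sum>j<k. c a j * g i j)"
    by metis
  have "(\<Sum>a\<in>A. d a * x a i) = (\<Sum>j<k. (\<Sum>a\<in>A. d a * c a j) * g i j)" for i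
  proof -
    have "(\<Sum>a\<in>A. d a * x a i) = (\<Sum>a\<in>A. \<Sum>j<k. d a * c a j * g i j)"
      using c by (simp add: sum_distrib_left mult.assoc)
    also have "\<dots> = (\<Sum>j<k. \<Sum>a\<in>A. d a * c a j * g i j)" by (rule sum.swap)
    finally show ?thesis by (simp add: sum_distrib_right)
  qed
  then show ?thesis by (auto simp: colspan_def)
qed

lemma colspan_scale: "v \<in> colspan n g k \<Longrightarrow> (\<lambda>i. a * v i) \<in> colspan n g k"
  using colspan_sum[of "{0::nat}" "\<lambda>_. v" n g k "\<lambda>_. a"] by simp

lemma zero_in_colspan: "(\<lambda>i. 0) \<in> colspan n g k"
  by (auto simp: colspan_def intro!: exI[of _ "\<lambda>_. 0"])

lemma mcol_in_colspan:
  assumes "j < k"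
  shows "mcol g j \<in> colspan n g k"
proof -
  have "(\<Sum>l<k. (if l = j then 1 else 0) * g i l) = g i j" for i
  proof -
    have "(\<Sum>l<k. (if l = j then 1 else 0) * g i l) = (\<Sum>l<k. if l = j then g i l else 0)"
      by (rule sum.cong) auto
    then show ?thesis using assms by simp
  qed
  then show ?thesis
    by (auto simp: colspan_def mcol_def intro!: exI[of _ "\<lambda>l. if l = j then 1 else 0"])
qed

lemma colspan_subsetI:
  assumes "\<And>j. j < k \<Longrightarrow> mcol h j \<in> colspan n g k'"
  shows "colspan n h k \<subseteq> colspan n g k'"
proof
  fix v assume "v \<in> colspan n h k"
  then obtain c where c: "v = (\<lambda>i. \<Sum>j<k. c j * h i j)" by (auto simp: colspan_def)
  have "(\<lambda>i. \<Sum>j\<in>{..<k}. c j * mcol h j i) \<in> colspan n g k'"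
    by (rule colspan_sum) (use assms in auto)
  then show "v \<in> colspan n g k'" using c by (simp add: mcol_def)
qed

lemma colspan_mono: "k \<le> k' \<Longrightarrow> colspan n g k \<subseteq> colspan n g k'"
  by (rule colspan_subsetI) (auto intro: mcol_in_colspan)

lemma colspan_outside: "g \<in> matrices n \<Longrightarrow> v \<in> colspan n g k \<Longrightarrow> n \<le> i \<Longrightarrow> v i = 0"
  by (auto simp: colspan_def matrices_def)

lemma colspan_coefficients:
  assumes "\<And>j. j < k \<Longrightarrow> mcol g j \<in> colspan n h k'"
  shows "\<exists>C. \<forall>i j. j < k \<longrightarrow> g i j = (\<Sum>l<k'. C j l * h i l)"
proof -
  have "\<forall>j. \<exists>c. j < k \<longrightarrow> mcol g j = (\<lambda>i. \<Sum>l<k'. c l * h i l)"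
    using assms by (auto simp: colspan_def)
  then obtain C where "\<And>j. j < k \<Longrightarrow> mcol g j = (\<lambda>i. \<Sum>l<k'. C j l * h i l)"
    by metis
  then show ?thesis by (auto simp: mcol_def fun_eq_iff)
qed

lemma left_inverse_imp_right_inverse:
  fixes D C :: "nat \<Rightarrow> nat \<Rightarrow> complex"
  assumes "\<And>i j. i < k \<Longrightarrow> j < k \<Longrightarrow> (\<Sum>l<k. D i l * C l j) = (if i = j then 1 else 0)"
    and "i < k" "j < k"
  shows "(\<Sum>l<k. C i l * D l j) = (if i = j then 1 else 0)"
proof -
  let ?D = "mat k k (\<lambda>(i,j). D i j)" and ?C = "mat k k (\<lambda>(i,j). C i j)"
  have "?D * ?C = 1\<^sub>m k"
    by (rule eq_matI) (auto simp: scalar_prod_def assms(1) atLeast0LessThan)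
  then have "?C * ?D = 1\<^sub>m k"
    by (rule mat_mult_left_right_inverse[rotated 2]) auto
  then have "(?C * ?D) $$ (i,j) = (1\<^sub>m k :: complex mat) $$ (i,j)" by simp
  then show ?thesis
    using assms(2,3) by (simp add: scalar_prod_def atLeast0LessThan)
qed

text \<open>Writing the first \<open>k\<close> columns of \<open>g\<close> in terms of those of \<open>h\<close> gives a
  \<open>k \<times> k\<close> coefficient matrix \<open>C\<close>; the block \<open>D\<close> of \<open>g\<^sup>-\<^sup>1 h\<close> is a left inverse of
  \<open>C\<^sup>T\<close>, hence also a right inverse, which expresses the columns of \<open>h\<close> through those of \<open>g\<close>.\<close>
lemma GL_colspan_eq:
  assumes g: "g \<in> GL n" and k: "k \<le> n"
    and sub: "colspan n g k \<subseteq> colspan n h k"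
  shows "colspan n g k = colspan n h k"
proof
  obtain gi where gi: "mmul n gi g = idm n" using g by (rule GL_left_inverse)
  have "mcol g j \<in> colspan n h k" if "j < k" for j
    using mcol_in_colspan[OF that] sub by blast
  then obtain C where gC: "\<And>m j. j < k \<Longrightarrow> g m j = (\<Sum>l<k. C j l * h m l)"
    using colspan_coefficients by blast
  define D where "D i l = mmul n gi h i l" for i l
  have DC: "(\<Sum>l<k. D i l * C j l) = (if i = j then 1 else 0)" if "i < k" "j < k" for i j
  proof -
    have "(if i = j then 1 else 0) = mmul n gi g i j"
      using gi that k by (simp add: idm_def)
    also have "\<dots> = (\<Sum>m<n. gi i m * g m j)"
      using that k by (simp add: mmul_def)
    also have "\<dots> = (\<Sum>m<n. \<Sum>l<k. gi i m * h m l * C j l)"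
      using that by (simp add: gC sum_distrib_left ac_simps)
    also have "\<dots> = (\<Sum>l<k. \<Sum>m<n. gi i m * h m l * C j l)" by (rule sum.swap)
    also have "\<dots> = (\<Sum>l<k. D i l * C j l)"
      using that k by (auto simp: D_def mmul_def sum_distrib_right intro!: sum.cong)
    finally show ?thesis by simp
  qed
  have CD: "(\<Sum>l<k. C l i * D l j) = (if i = j then 1 else 0)" if "i < k" "j < k" for i j
    using left_inverse_imp_right_inverse[of k D "\<lambda>l j. C j l", OF DC that] by simp
  show "colspan n h k \<subseteq> colspan n g k"
  proof (rule colspan_subsetI)
    fix l' assume l': "l' < k"
    have "mcol h l' = (\<lambda>i. \<Sum>j<k. D j l' * g i j)"
    proof
      fix i
      have "(\<Sum>j<k. D j l' * g i j) = (\<Sum>j<k. \<Sum>l<k. C j l * D j l' * h i l)"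
        by (simp add: gC sum_distrib_left ac_simps)
      also have "\<dots> = (\<Sum>l<k. \<Sum>j<k. C j l * D j l' * h i l)" by (rule sum.swap)
      also have "\<dots> = (\<Sum>l<k. (if l = l' then h i l else 0))"
        using CD l' by (intro sum.cong) (auto simp: sum_distrib_right[symmetric])
      finally show "mcol h l' i = (\<Sum>j<k. D j l' * g i j)"
        using l' by (simp add: mcol_def)
    qed
    then show "mcol h l' \<in> colspan n g k" by (auto simp: colspan_def)
  qed
qed (rule sub)

definition block_start :: "nat set \<Rightarrow> nat \<Rightarrow> nat" where
  "block_start J k = (LEAST a. a \<le> k \<and> {a<..k} \<subseteq> J)"

definition block_end :: "nat \<Rightarrow> nat set \<Rightarrow> nat \<Rightarrow> nat" where
  "block_end n J k = (GREATEST b. k \<le> b \<and> b < n \<and> {k<..b} \<subseteq> J)"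

lemma wJ_eq: "k < n \<Longrightarrow> wJ n J k = block_start J k + block_end n J k - k"
  by (simp add: wJ_def block_start_def block_end_def)

lemma wJ_outside: "\<not> k < n \<Longrightarrow> wJ n J k = k"
  by (simp add: wJ_def)

lemma interval_subset_join: "{a<..k} \<subseteq> J \<Longrightarrow> {k<..b} \<subseteq> J \<Longrightarrow> {a<..b} \<subseteq> (J::nat set)"
proof
  fix x assume "{a<..k} \<subseteq> J" "{k<..b} \<subseteq> J" "x \<in> {a<..b}"
  then show "x \<in> J" by (cases "x \<le> k") auto
qed

lemma greaterThanAtMost_pred: "0 < k \<Longrightarrow> {k - 1<..k} = {k :: nat}"
  by auto

lemma block_start_bounds: "block_start J k \<le> k" "{block_start J k<..k} \<subseteq> J"
  "a \<le> k \<Longrightarrow> {a<..k} \<subseteq> J \<Longrightarrow> block_start J k \<le> a"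
proof -
  have ex: "k \<le> k \<and> {k<..k} \<subseteq> J" by simp
  show "block_start J k \<le> k" "{block_start J k<..k} \<subseteq> J"
    using LeastI[of "\<lambda>a. a \<le> k \<and> {a<..k} \<subseteq> J", OF ex] by (auto simp: block_start_def)
  show "a \<le> k \<Longrightarrow> {a<..k} \<subseteq> J \<Longrightarrow> block_start J k \<le> a"
    unfolding block_start_def by (rule Least_le) simp
qed

lemma block_end_bounds: assumes "k < n"
  shows "k \<le> block_end n J k" "block_end n J k < n" "{k<..block_end n J k} \<subseteq> J"
    "k \<le> b \<Longrightarrow> b < n \<Longrightarrow> {k<..b} \<subseteq> J \<Longrightarrow> b \<le> block_end n J k"
proof -
  have G: "k \<le> block_end n J k \<and> block_end n J k < n \<and> {k<..block_end n J k} \<subseteq> J"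
    unfolding block_end_def by (rule GreatestI_nat[where k=k and b=n]) (use assms in auto)
  then show "k \<le> block_end n J k" "block_end n J k < n" "{k<..block_end n J k} \<subseteq> J" by auto
  show "k \<le> b \<Longrightarrow> b < n \<Longrightarrow> {k<..b} \<subseteq> J \<Longrightarrow> b \<le> block_end n J k"
    unfolding block_end_def by (rule Greatest_le_nat[where b = n]) auto
qed

lemma same_block:
  assumes k: "k < n" and m: "block_start J k \<le> m" "m \<le> block_end n J k"
  shows "block_start J m = block_start J k" "block_end n J m = block_end n J k"
proof -
  let ?a = "block_start J k" and ?b = "block_end n J k"
  have mn: "m < n" using m block_end_bounds(2)[OF k, of J] by simp
  have ak: "?a \<le> k" and kb: "k \<le> ?b" using block_start_bounds(1) block_end_bounds(1)[OF k] .
  have blk: "{?a<..?b} \<subseteq> J"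
    using interval_subset_join[OF block_start_bounds(2) block_end_bounds(3)[OF k]] .
  have "{?a<..m} \<subseteq> J" using blk m(2) by auto
  then have start_le: "block_start J m \<le> ?a" using m(1) by (rule block_start_bounds(3)[rotated])
  moreover have sub: "{block_start J m<..k} \<subseteq> J"
  proof
    fix x assume "x \<in> {block_start J m<..k}"
    then show "x \<in> J" using block_start_bounds(2)[of J m] blk m kb by (cases "x \<le> m") auto
  qed
  have "?a \<le> block_start J m"
    by (rule block_start_bounds(3)[OF _ sub]) (use start_le ak in simp)
  ultimately show "block_start J m = ?a" by simp
  have end_ge: "?b \<le> block_end n J m"
    using blk m block_end_bounds(2)[OF k] by (intro block_end_bounds(4)[OF mn]) auto
  moreover have "{k<..block_end n J m} \<subseteq> J"
  proof
    fix x assume "x \<in> {k<..block_end n J m}"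
    then show "x \<in> J" using block_end_bounds(3)[OF mn, of J] blk m ak by (cases "x \<le> m") auto
  qed
  then have "block_end n J m \<le> ?b"
    using end_ge kb block_end_bounds(2)[OF mn] by (intro block_end_bounds(4)[OF k]) auto
  ultimately show "block_end n J m = ?b" by simp
qed

lemma block_end_less_cut:
  assumes "k < n" "k < c" "c \<notin> J"
  shows "block_end n J k < c"
  using block_end_bounds(3)[OF assms(1), of J] assms
  by (meson greaterThanAtMost_iff not_less subsetD)

lemma cut_le_block_start:
  assumes "c \<le> k" "c \<notin> J"
  shows "c \<le> block_start J k"
  using block_start_bounds(2)[of J k] assms by (meson greaterThanAtMost_iff not_less subsetD)

lemma Suc_block_end_notin:
  assumes "k < n" "Suc (block_end n J k) < n"
  shows "Suc (block_end n J k) \<notin> J"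
proof
  assume "Suc (block_end n J k) \<in> J"
  then have "{k<..Suc (block_end n J k)} \<subseteq> J"
    using block_end_bounds(3)[OF assms(1), of J] by (auto simp: le_Suc_eq)
  then show False
    using block_end_bounds(4)[where J=J, OF assms(1) _ assms(2)]
      block_end_bounds(1)[OF assms(1), of J]
    by simp
qed

lemma wJ_bounds:
  assumes "k < n"
  shows "block_start J k \<le> wJ n J k" "wJ n J k \<le> block_end n J k" "wJ n J k < n"
  using wJ_eq[OF assms, of J] block_start_bounds(1)[of J k] block_end_bounds(1,2)[OF assms, of J]
  by auto

lemma wJ_less: "k < n \<Longrightarrow> wJ n J k < n"
  using wJ_bounds by blast

lemma wJ_wJ: "wJ n J (wJ n J k) = k"
proof (cases "k < n")
  case True
  let ?m = "wJ n J k"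
  have "block_start J ?m = block_start J k" "block_end n J ?m = block_end n J k"
    using same_block[OF True, where J=J] wJ_bounds[OF True] by auto
  then show ?thesis
    using wJ_eq[OF True] wJ_eq[OF wJ_less[OF True]] block_start_bounds(1)[of J k]
      block_end_bounds(1)[OF True, of J] by simp
qed (simp add: wJ_outside)

lemma wJ_permutes: "wJ n J permutes {..<n}"
  unfolding permutes_def
proof (intro conjI allI impI)
  show "x \<notin> {..<n} \<Longrightarrow> wJ n J x = x" for x by (simp add: wJ_outside)
  show "\<exists>!x. wJ n J x = y" for y
    by (rule ex1I[of _ "wJ n J y"]) (auto simp: wJ_wJ dest: arg_cong[of _ _ "wJ n J"])
qed

lemma wJ_same_block:
  assumes xy: "x \<le> y" "y < n" and J: "{x<..y} \<subseteq> J"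
  shows "wJ n J y + y = wJ n J x + x"
proof -
  have xn: "x < n" using xy by simp
  have y_le: "y \<le> block_end n J x" using block_end_bounds(4)[OF xn _ _ J] xy by auto
  then have "block_start J y = block_start J x" "block_end n J y = block_end n J x"
    using same_block[OF xn, of J y] block_start_bounds(1)[of J x] xy by auto
  then show ?thesis
    using wJ_eq[OF xn] wJ_eq[OF xy(2)] xy y_le block_start_bounds(1)[of J x] by simp
qed

lemma wJ_inversion_iff:
  assumes xy: "x < y" "y < n"
  shows "wJ n J y < wJ n J x \<longleftrightarrow> {x<..y} \<subseteq> J"
proof
  assume "{x<..y} \<subseteq> J"
  then show "wJ n J y < wJ n J x" using wJ_same_block[of x y n J] xy by simp
next
  assume lt: "wJ n J y < wJ n J x"
  show "{x<..y} \<subseteq> J"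
  proof
    fix z assume z: "z \<in> {x<..y}"
    show "z \<in> J"
    proof (rule ccontr)
      assume "z \<notin> J"
      then have "block_end n J x < z" "z \<le> block_start J y"
        using z xy by (auto intro: block_end_less_cut cut_le_block_start)
      then show False using wJ_bounds[of x n J] wJ_bounds[OF xy(2), of J] xy lt by simp
    qed
  qed
qed

lemma wJ_less_cut:
  assumes "c \<notin> J" "c \<le> n" "l < c"
  shows "wJ n J l < c"
  using block_end_less_cut[of l n c J] wJ_bounds[of l n J] assms by simp

lemma wJ_pred_le:
  assumes "0 < m" "m < n"
  shows "wJ n J (m - 1) \<le> Suc (wJ n J m)"
proof (cases "m \<in> J")
  case True
  then show ?thesis using wJ_same_block[of "m - 1" m n J] greaterThanAtMost_pred[of m] assms by auto
next
  case False
  then have "\<not> wJ n J m < wJ n J (m - 1)"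
    using wJ_inversion_iff[of "m - 1" m n J] greaterThanAtMost_pred[of m] assms by simp
  moreover have "wJ n J m \<noteq> wJ n J (m - 1)"
  proof
    assume "wJ n J m = wJ n J (m - 1)"
    then have "wJ n J (wJ n J m) = wJ n J (wJ n J (m - 1))" by simp
    then show False using assms(1) by (simp add: wJ_wJ)
  qed
  ultimately show ?thesis by simp
qed

lemma wJ_block_start:
  assumes "j < n" "block_start J j = j"
  shows "wJ n J j = block_end n J j"
  using wJ_eq[OF assms(1)] assms block_end_bounds(1)[OF assms(1), of J] by simp

lemma wJ_not_block_start:
  assumes "j < n" "block_start J j \<noteq> j"
  shows "j \<in> J" "0 < j" "wJ n J (j - 1) = Suc (wJ n J j)"
proof -
  have "block_start J j < j" using block_start_bounds(1)[of J j] assms by simp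
  then show jJ: "j \<in> J" using block_start_bounds(2)[of J j] by auto
  show "0 < j" using \<open>block_start J j < j\<close> by simp
  then show "wJ n J (j - 1) = Suc (wJ n J j)"
    using wJ_same_block[of "j - 1" j n J] greaterThanAtMost_pred[of j] jJ assms by auto
qed

lemma wJ_crosses_cut:
  assumes k: "k \<in> J" "0 < k" "k < n"
  shows "\<exists>l<k. k \<le> wJ n J l"
proof -
  define l where "l = block_start J (k - 1)"
  have kn: "k - 1 < n" using k by simp
  have "{k - 1<..k} = {k}" using k(2) by (rule greaterThanAtMost_pred)
  then have k_le: "k \<le> block_end n J (k - 1)"
    using block_end_bounds(4)[OF kn, of k J] k by auto
  have l_le: "l \<le> k - 1" unfolding l_def by (rule block_start_bounds(1))
  have "block_start J l = l" "block_end n J l = block_end n J (k - 1)"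
    using same_block[OF kn, of J l] l_le k_le by (auto simp: l_def)
  then have "k \<le> wJ n J l"
    using wJ_eq[of l n J] l_le kn k_le by simp
  then show ?thesis using l_le k by (intro exI[of _ l]) auto
qed

lemma flag_of_Fl: "g \<in> GL n \<Longrightarrow> flag_of n g \<in> Fl n"
  by (simp add: Fl_def)

lemma istopology_flag_top:
  "istopology (\<lambda>U. U \<subseteq> Fl n \<and> openin (top_of_set (GL n)) {g \<in> GL n. flag_of n g \<in> U})"
proof -
  have "{g \<in> GL n. flag_of n g \<in> S \<inter> T} =
      {g \<in> GL n. flag_of n g \<in> S} \<inter> {g \<in> GL n. flag_of n g \<in> T}" for S T
    by auto
  moreover have "{g \<in> GL n. flag_of n g \<in> \<Union>K} = (\<Union>U\<in>K. {g \<in> GL n. flag_of n g \<in> U})" for K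
    by auto
  ultimately show ?thesis
    unfolding istopology_def by (auto intro!: openin_Int openin_Union)
qed

lemma openin_flag_top:
  "openin (flag_top n) U \<longleftrightarrow> U \<subseteq> Fl n \<and> openin (top_of_set (GL n)) {g \<in> GL n. flag_of n g \<in> U}"
  unfolding flag_top_def using istopology_flag_top[of n] by simp

lemma topspace_flag_top: "topspace (flag_top n) = Fl n"
proof
  show "topspace (flag_top n) \<subseteq> Fl n"
    unfolding topspace_def by (auto simp: openin_flag_top)
  have "{g \<in> GL n. flag_of n g \<in> Fl n} = GL n" using flag_of_Fl by auto
  then have "openin (flag_top n) (Fl n)" by (simp add: openin_flag_top)
  then show "Fl n \<subseteq> topspace (flag_top n)" by (rule openin_subset)
qed

lemma closedin_flag_topI:
  assumes "C \<subseteq> Fl n" "closedin (top_of_set (GL n)) {g \<in> GL n. flag_of n g \<in> C}"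
  shows "closedin (flag_top n) C"
proof -
  have "{g \<in> GL n. flag_of n g \<in> Fl n - C} = GL n - {g \<in> GL n. flag_of n g \<in> C}"
    using flag_of_Fl by auto
  moreover have "openin (top_of_set (GL n)) (GL n - {g \<in> GL n. flag_of n g \<in> C})"
    using assms(2) by (simp add: closedin_def)
  ultimately show ?thesis using assms(1)
    by (simp add: closedin_def topspace_flag_top openin_flag_top)
qed

lemma continuous_map_flag_of: "continuous_map (top_of_set (GL n)) (flag_top n) (flag_of n)"
  unfolding continuous_map_def
  by (auto simp: topspace_flag_top flag_of_Fl openin_flag_top)

lemma permmat_matrices[simp]: "permmat n w \<in> matrices n"
  by (simp add: permmat_def matrices_def)

lemma mmul_permmat_right:
  assumes "i < n" "j < n" "w j < n"
  shows "mmul n A (permmat n w) i j = A i (w j)"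
proof -
  have "(\<Sum>k<n. A i k * permmat n w k j) = (\<Sum>k<n. if k = w j then A i k else 0)"
    using assms by (intro sum.cong) (auto simp: permmat_def)
  also have "\<dots> = A i (w j)" using assms by simp
  finally show ?thesis using assms by (simp add: mmul_def)
qed

lemma permmat_mmul_permmat:
  assumes "\<And>j. j < n \<Longrightarrow> w' j < n" "\<And>j. j < n \<Longrightarrow> w (w' j) = j"
  shows "mmul n (permmat n w) (permmat n w') = idm n"
proof (intro ext)
  fix i j
  show "mmul n (permmat n w) (permmat n w') i j = idm n i j"
  proof (cases "i < n \<and> j < n")
    case True
    then show ?thesis
      using assms mmul_permmat_right[of i n j w' "permmat n w"] by (auto simp: permmat_def idm_def)
  qed (auto simp: mmul_def idm_def)
qed

lemma permmat_GL:
  assumes w: "w permutes {..<n}"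
  shows "permmat n w \<in> GL n"
proof -
  obtain w' where w': "w' permutes {..<n}" "\<And>x. w (w' x) = x" "\<And>x. w' (w x) = x"
    using permutes_inv[OF w] permutes_inverses[OF w] by blast
  have "w j < n" "w' j < n" if "j < n" for j
    using that permutes_in_image[OF w] permutes_in_image[OF w'(1)] by auto
  then have "mmul n (permmat n w) (permmat n w') = idm n"
      "mmul n (permmat n w') (permmat n w) = idm n"
    using w' by (auto intro: permmat_mmul_permmat)
  then show ?thesis unfolding GL_def by auto
qed

lemma permmat_wJ_GL: "permmat n (wJ n J) \<in> GL n"
  by (rule permmat_GL[OF wJ_permutes])

lemma mcol_permmat: "j < n \<Longrightarrow> w j < n \<Longrightarrow> mcol (permmat n w) j = basis_vec (w j)"
  by (auto simp: mcol_def permmat_def basis_vec_def)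

lemma permmat_in_dcoset: "idm n \<in> H \<Longrightarrow> permmat n w \<in> dcoset n H w"
  unfolding dcoset_def
  by (rule CollectI, rule exI[of _ "idm n"], rule exI[of _ "idm n"])
     (simp add: mmul_idm_left mmul_idm_right)

lemma dcoset_GL:
  assumes "H \<subseteq> GL n" "permmat n w \<in> GL n"
  shows "dcoset n H w \<subseteq> GL n"
  using assms by (auto simp: dcoset_def Bup_def intro!: GL_mmul)

lemma dcoset_mmul_right:
  assumes "g \<in> dcoset n H w" "b \<in> Bup n"
  shows "mmul n g b \<in> dcoset n H w"
proof -
  obtain b1 b2 where g: "g = mmul n (mmul n b1 (permmat n w)) b2" "b1 \<in> H" "b2 \<in> Bup n"
    using assms(1) by (auto simp: dcoset_def)
  have "mmul n g b = mmul n (mmul n b1 (permmat n w)) (mmul n b2 b)" by (simp add: g mmul_assoc)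
  then show ?thesis using g assms(2) Bup_mmul unfolding dcoset_def by blast
qed

lemma dcoset_mmul_left:
  assumes "g \<in> dcoset n H w" "b \<in> H" "\<And>x y. x \<in> H \<Longrightarrow> y \<in> H \<Longrightarrow> mmul n x y \<in> H"
  shows "mmul n b g \<in> dcoset n H w"
proof -
  obtain b1 b2 where g: "g = mmul n (mmul n b1 (permmat n w)) b2" "b1 \<in> H" "b2 \<in> Bup n"
    using assms(1) by (auto simp: dcoset_def)
  have "mmul n b g = mmul n (mmul n (mmul n b b1) (permmat n w)) b2" by (simp add: g mmul_assoc)
  then show ?thesis using g assms(2,3) unfolding dcoset_def by blast
qed

lemma Nop_colspan_subset:
  assumes "\<And>j. j < k \<Longrightarrow> Nop n (mcol g j) \<in> colspan n h k'"
  shows "Nop n ` colspan n g k \<subseteq> colspan n h k'"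
proof
  fix u assume "u \<in> Nop n ` colspan n g k"
  then obtain c where u: "u = Nop n (\<lambda>i. \<Sum>j<k. c j * g i j)" by (auto simp: colspan_def)
  have "u = (\<lambda>i. \<Sum>j\<in>{..<k}. c j * Nop n (mcol g j) i)"
    by (auto simp: u Nop_def mcol_def)
  also have "\<dots> \<in> colspan n h k'" by (rule colspan_sum) (use assms in auto)
  finally show "u \<in> colspan n h k'" .
qed

lemma Nop_basis_vec:
  "m < n \<Longrightarrow> Nop n (basis_vec m) = (if m = 0 then (\<lambda>i. 0) else basis_vec (m - 1))"
  by (auto simp: Nop_def basis_vec_def fun_eq_iff)

lemma perm_flag_wJ_Fl: "perm_flag n (wJ n J) \<in> Fl n"
  by (simp add: perm_flag_def flag_of_Fl permmat_wJ_GL)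

lemma Nop_mcol_permmat_wJ:
  assumes j: "j < n"
  shows "Nop n (mcol (permmat n (wJ n J)) j) \<in> colspan n (permmat n (wJ n J)) (Suc (Suc j))"
proof -
  let ?w = "wJ n J" and ?P = "permmat n (wJ n J)"
  have wj: "?w j < n" using wJ_less[OF j] .
  show ?thesis
  proof (cases "?w j = 0")
    case True
    then show ?thesis
      using mcol_permmat[of j n ?w, OF j wj] Nop_basis_vec[OF wj] zero_in_colspan by simp
  next
    case False
    let ?l = "?w (?w j - 1)"
    have "?w j - 1 < n" using wj by simp
    then have "mcol ?P ?l = basis_vec (?w j - 1)"
      using mcol_permmat[OF wJ_less] wJ_wJ[of n J "?w j - 1"] by simp
    moreover have "?l \<le> Suc j" using wJ_pred_le[of "?w j" n J] False wj wJ_wJ[of n J j] by simp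
    then have "mcol ?P ?l \<in> colspan n ?P (Suc (Suc j))" by (intro mcol_in_colspan) simp
    ultimately show ?thesis
      using mcol_permmat[of j n ?w, OF j wj] Nop_basis_vec[OF wj] False by simp
  qed
qed

lemma perm_flag_wJ_Pet: "perm_flag n (wJ n J) \<in> Pet n"
  unfolding Pet_def
proof (intro CollectI conjI ballI perm_flag_wJ_Fl)
  fix i assume i: "i \<in> {1..n-1}"
  let ?P = "permmat n (wJ n J)"
  have "Nop n (mcol ?P j) \<in> colspan n ?P (Suc i)" if "j < i" for j
    using Nop_mcol_permmat_wJ[of j n J] colspan_mono[of "Suc (Suc j)" "Suc i" n ?P] that i by auto
  then have "Nop n ` colspan n ?P i \<subseteq> colspan n ?P (Suc i)" by (rule Nop_colspan_subset)
  then show "Nop n ` perm_flag n (wJ n J) i \<subseteq> perm_flag n (wJ n J) (Suc i)"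
    using i by (auto simp: perm_flag_def flag_of_def)
qed

lemma continuous_on_entry: "continuous_on S (\<lambda>g::cmat. g i j)"
  using continuous_on_product_then_coordinatewise[OF continuous_on_product_coordinates[of i]]
  by (rule continuous_on_subset) simp

lemma continuous_on_fst_entry: "continuous_on S (\<lambda>p::cmat \<times> cvec. fst p i j)"
  using continuous_on_compose[OF continuous_on_fst[OF continuous_on_id] continuous_on_entry]
  by (simp add: o_def)

lemma continuous_on_snd_entry: "continuous_on S (\<lambda>p::cmat \<times> cvec. snd p l)"
  using continuous_on_compose[OF continuous_on_snd[OF continuous_on_id]
      continuous_on_product_then_coordinatewise[OF continuous_on_id]]
  by (simp add: o_def)

lemma closed_entry_eq_0: "closed {g::cmat. g i j = 0}"
  using closed_Collect_eq[OF continuous_on_entry continuous_on_const] by simp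

lemma closure_of_flags_subset:
  assumes "C \<subseteq> Fl n" "closed Z" "\<And>g. g \<in> GL n \<Longrightarrow> flag_of n g \<in> C \<longleftrightarrow> g \<in> Z"
    and "S \<subseteq> GL n \<inter> Z"
  shows "flag_top n closure_of (flag_of n ` S) \<subseteq> C"
proof (rule closure_of_minimal)
  show "flag_of n ` S \<subseteq> C" using assms(3,4) by blast
  have "{g \<in> GL n. flag_of n g \<in> C} = GL n \<inter> Z" using assms(3) by blast
  then show "closedin (flag_top n) C"
    using assms(1,2) by (intro closedin_flag_topI) (auto intro: closedin_closed_Int)
qed

definition std_at_cuts :: "nat \<Rightarrow> nat set \<Rightarrow> (nat \<Rightarrow> cvec set) set" where
  "std_at_cuts n J =
    {F \<in> Fl n. \<forall>c. c \<notin> J \<longrightarrow> 0 < c \<longrightarrow> c < n \<longrightarrow> (\<forall>v\<in>F c. \<forall>i. c \<le> i \<longrightarrow> v i = 0)}"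

definition block_triangular :: "nat \<Rightarrow> nat set \<Rightarrow> cmat set" where
  "block_triangular n J = {g. \<forall>c i j. c \<notin> J \<longrightarrow> c < n \<longrightarrow> j < c \<longrightarrow> c \<le> i \<longrightarrow> g i j = 0}"

lemma flag_of_std_at_cuts_iff:
  assumes "g \<in> GL n"
  shows "flag_of n g \<in> std_at_cuts n J \<longleftrightarrow> g \<in> block_triangular n J"
proof
  assume std: "flag_of n g \<in> std_at_cuts n J"
  have h: "v i = 0"
    if "c \<notin> J" "0 < c" "c < n" "v \<in> colspan n g c" "c \<le> i" for c v i
    using std that by (auto simp: std_at_cuts_def flag_of_def)
  show "g \<in> block_triangular n J" unfolding block_triangular_def
  proof (intro CollectI allI impI)
    fix c i j assume "c \<notin> J" "c < n" "j < c" "c \<le> i"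
    then show "g i j = 0"
      using h[of c "mcol g j" i] mcol_in_colspan[of j c g n] by (simp add: mcol_def)
  qed
next
  assume Z: "g \<in> block_triangular n J"
  show "flag_of n g \<in> std_at_cuts n J" unfolding std_at_cuts_def
  proof (intro CollectI conjI allI impI ballI flag_of_Fl assms)
    fix c v i assume c: "c \<notin> J" "0 < c" "c < n" and v: "v \<in> flag_of n g c" and i: "c \<le> i"
    obtain d where d: "v = (\<lambda>i. \<Sum>j<c. d j * g i j)"
      using v c by (auto simp: flag_of_def colspan_def)
    have "g i j = 0" if "j < c" for j using Z c i that by (auto simp: block_triangular_def)
    then show "v i = 0" by (simp add: d)
  qed
qed

lemma closed_block_triangular: "closed (block_triangular n J)"
proof -
  have "block_triangular n J = (\<Inter>t\<in>{(c,i,j). c \<notin> J \<and> c < n \<and> j < c \<and> c \<le> i}.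
            {g. g (fst (snd t)) (snd (snd t)) = 0})"
    by (auto simp: block_triangular_def)
  then show ?thesis using closed_entry_eq_0 by auto
qed

lemma dcoset_wJ_block_triangular: "dcoset n (Bup n) (wJ n J) \<subseteq> block_triangular n J"
proof
  fix g assume "g \<in> dcoset n (Bup n) (wJ n J)"
  then obtain b1 b2 where g_eq: "g = mmul n (mmul n b1 (permmat n (wJ n J))) b2"
    and b1: "b1 \<in> Bup n" and b2: "b2 \<in> Bup n"
    by (auto simp: dcoset_def)
  show "g \<in> block_triangular n J" unfolding block_triangular_def
  proof (intro CollectI allI impI)
    fix c i j assume c: "c \<notin> J" "c < n" and ji: "j < c" "c \<le> i"
    show "g i j = 0"
    proof (cases "i < n")
      case True
      have "mmul n b1 (permmat n (wJ n J)) i l * b2 l j = 0" if "l < n" for l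
      proof (cases "l \<le> j")
        case True
        have "wJ n J l < c" using wJ_less_cut[of c J n l] c True ji by simp
        then have "b1 i (wJ n J l) = 0" using b1 ji by (auto simp: Bup_def)
        then show ?thesis
          using mmul_permmat_right[of i n l "wJ n J" b1] \<open>i < n\<close> that wJ_less[OF that] by simp
      next
        case False then show ?thesis using b2 by (auto simp: Bup_def)
      qed
      then have "(\<Sum>l<n. mmul n b1 (permmat n (wJ n J)) i l * b2 l j) = 0"
        by (intro sum.neutral) (simp del: mult_eq_0_iff)
      moreover have "g i j = (\<Sum>l<n. mmul n b1 (permmat n (wJ n J)) i l * b2 l j)"
        using True ji c unfolding g_eq by (subst mmul_def) simp
      ultimately show ?thesis by simp
    qed (simp add: g_eq mmul_def)
  qed
qed

lemma Schubert_wJ_subset_std_at_cuts: "Schubert n (wJ n J) \<subseteq> std_at_cuts n J"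
  unfolding Schubert_def
proof (rule closure_of_flags_subset)
  show "std_at_cuts n J \<subseteq> Fl n" by (auto simp: std_at_cuts_def)
  show "dcoset n (Bup n) (wJ n J) \<subseteq> GL n \<inter> block_triangular n J"
    using dcoset_wJ_block_triangular dcoset_GL[of "Bup n" n] permmat_wJ_GL by (auto simp: Bup_def)
qed (auto simp: flag_of_std_at_cuts_iff closed_block_triangular)
definition mvmul :: "nat \<Rightarrow> cmat \<Rightarrow> cvec \<Rightarrow> cvec" where
  "mvmul n A x = (\<lambda>i. if i < n then \<Sum>m<n. A i m * x m else 0)"

lemma mvmul_colspan:
  assumes B: "B \<in> matrices n" and x: "x \<in> colspan n B k"
  shows "mvmul n A x \<in> colspan n (mmul n A B) k"
proof -
  obtain c where c: "x = (\<lambda>i. \<Sum>l<k. c l * B i l)" using x by (auto simp: colspan_def)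
  have "mvmul n A x i = (\<Sum>l<k. c l * mmul n A B i l)" for i
  proof (cases "i < n")
    case True
    have "(\<Sum>m<n. A i m * x m) = (\<Sum>m<n. \<Sum>l<k. c l * (A i m * B m l))"
      by (simp add: c sum_distrib_left ac_simps)
    also have "\<dots> = (\<Sum>l<k. \<Sum>m<n. c l * (A i m * B m l))" by (rule sum.swap)
    also have "\<dots> = (\<Sum>l<k. c l * mmul n A B i l)"
      using True B by (intro sum.cong refl) (auto simp: mmul_def matrices_def sum_distrib_left)
    finally show ?thesis using True by (simp add: mvmul_def)
  qed (simp add: mmul_def mvmul_def)
  then show ?thesis by (auto simp: colspan_def)
qed

lemma mvmul_basis_vec: "j < n \<Longrightarrow> mvmul n A (basis_vec j) = (\<lambda>i. if i < n then A i j else 0)"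
  by (auto simp: mvmul_def basis_vec_def if_distrib cong: if_cong)

lemma colspan_idmI:
  assumes "\<And>i. k \<le> i \<Longrightarrow> v i = 0" "\<And>i. n \<le> i \<Longrightarrow> v i = 0"
  shows "v \<in> colspan n (idm n) k"
proof -
  have "v i = (\<Sum>m<k. v m * idm n i m)" for i
  proof -
    have "(\<Sum>m<k. v m * idm n i m) = (\<Sum>m<k. if m = i then (if i < n then v i else 0) else 0)"
      by (intro sum.cong refl) (auto simp: idm_def)
    also have "\<dots> = v i" using assms by (auto simp: not_less)
    finally show ?thesis ..
  qed
  then show ?thesis by (auto simp: colspan_def)
qed

lemma basis_vec_in_colspan_Bup:
  assumes b: "b \<in> Bup n" and j: "j < n"
  shows "basis_vec j \<in> colspan n b (Suc j)"
proof -
  have bGL: "b \<in> GL n" using b by (simp add: Bup_def)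
  have "colspan n b (Suc j) \<subseteq> colspan n (idm n) (Suc j)"
    using b GL_matrices[OF bGL]
    by (intro colspan_subsetI colspan_idmI) (auto simp: Bup_def mcol_def matrices_def)
  then have "colspan n b (Suc j) = colspan n (idm n) (Suc j)"
    using j by (intro GL_colspan_eq[OF bGL]) auto
  moreover have "mcol (idm n) j = basis_vec j"
    using j by (auto simp: mcol_def idm_def basis_vec_def)
  ultimately show ?thesis using mcol_in_colspan[of j "Suc j" "idm n" n] by simp
qed

definition l1_sphere :: "nat \<Rightarrow> cvec set" where
  "l1_sphere k = {c. (\<forall>l. k \<le> l \<longrightarrow> c l = 0) \<and> (\<Sum>l<k. cmod (c l)) = 1}"

text \<open>Normalizing the coefficients to \<^const>\<open>l1_sphere\<close> makes this set closed: it is the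
  projection of a closed set along a compact factor.\<close>
definition low_combination :: "nat \<Rightarrow> nat \<Rightarrow> cmat set" where
  "low_combination k m = {g. \<exists>c\<in>l1_sphere k. \<forall>i<m. (\<Sum>l<k. c l * g i l) = 0}"

lemma compact_l1_sphere: "compact (l1_sphere k)"
proof -
  have "compactin (product_topology (\<lambda>_. euclidean) UNIV)
      (PiE UNIV (\<lambda>_::nat. cball (0::complex) 1))"
    by (simp add: compactin_PiE)
  then have cP: "compact (PiE UNIV (\<lambda>_::nat. cball (0::complex) 1))"
    by (simp add: euclidean_product_topology)
  have c1: "closed {c::cvec. c l = 0}" for l
    by (intro closed_Collect_eq continuous_on_product_coordinates continuous_on_const)
  have "closed (\<Inter>l\<in>{k..}. {c::cvec. c l = 0})" by (rule closed_INT, rule ballI, rule c1)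
  moreover have "closed {c::cvec. (\<Sum>l<k. cmod (c l)) = 1}"
    by (rule closed_Collect_eq) (intro continuous_intros continuous_on_product_coordinates)+
  ultimately have cl:
    "closed ((\<Inter>l\<in>{k..}. {c::cvec. c l = 0}) \<inter> {c::cvec. (\<Sum>l<k. cmod (c l)) = 1})"
    by (rule closed_Int)
  have eq: "l1_sphere k = ((\<Inter>l\<in>{k..}. {c::cvec. c l = 0}) \<inter> {c::cvec. (\<Sum>l<k. cmod (c l)) = 1})
     \<inter> PiE UNIV (\<lambda>_::nat. cball (0::complex) 1)"
  proof -
    have "cmod (c l) \<le> 1" if "c \<in> l1_sphere k" for c l
    proof (cases "l < k")
      case True
      have "cmod (c l) \<le> (\<Sum>l<k. cmod (c l))"
        using True by (intro member_le_sum) auto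
      then show ?thesis using that by (simp add: l1_sphere_def)
    next
      case False then show ?thesis using that by (simp add: l1_sphere_def)
    qed
    then show ?thesis by (auto simp: l1_sphere_def PiE_def)
  qed
  show ?thesis unfolding eq by (rule closed_Int_compact[OF cl cP])
qed


lemma closed_fst_image_compact:
  fixes T :: "('a::topological_space \<times> 'b::topological_space) set"
  assumes "closed T" "compact K"
  shows "closed (fst ` (T \<inter> (UNIV \<times> K)))"
proof -
  have eq: "prod_topology euclidean (subtopology euclidean K) = top_of_set (UNIV \<times> K)"
    by (metis subtopology_Times prod_topology_euclidean subtopology_UNIV)
  have "closedin (prod_topology euclidean (subtopology euclidean K)) (T \<inter> (UNIV \<times> K))"
    unfolding eq using closedin_closed_Int[OF assms(1), of "UNIV \<times> K"] by (simp add: Int_commute)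
  moreover have "closed_map (prod_topology euclidean (subtopology euclidean K)) euclidean fst"
    by (rule closed_map_fst) (rule compact_space_subtopology, simp add: assms(2))
  ultimately have "closedin euclidean (fst ` (T \<inter> (UNIV \<times> K)))"
    unfolding closed_map_def by blast
  then show ?thesis by (simp only: closed_closedin)
qed

lemma closed_low_combination: "closed (low_combination k m)"
proof -
  let ?T = "{p::cmat \<times> cvec. \<forall>i<m. (\<Sum>l<k. snd p l * fst p i l) = 0}"
  have "?T = (\<Inter>i\<in>{..<m}. {p. (\<Sum>l<k. snd p l * fst p i l) = 0})" by auto
  moreover have "closed {p::cmat \<times> cvec. (\<Sum>l<k. snd p l * fst p i l) = 0}" for i
    by (rule closed_Collect_eq)
      (intro continuous_intros continuous_on_fst_entry continuous_on_snd_entry)+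
  ultimately have "closed ?T" by auto
  moreover have "low_combination k m = fst ` (?T \<inter> (UNIV \<times> l1_sphere k))"
    by (force simp: low_combination_def)
  ultimately show ?thesis by (simp add: closed_fst_image_compact compact_l1_sphere)
qed

lemma l1_sphere_normalize:
  assumes "l0 < k" "c l0 \<noteq> 0"
  shows "\<exists>s c'. s \<noteq> 0 \<and> c' \<in> l1_sphere k \<and> (\<forall>l<k. c l = s * c' l)"
proof -
  define s where "s = (\<Sum>l<k. cmod (c l))"
  have "cmod (c l0) \<le> s" unfolding s_def using assms(1) by (intro member_le_sum) auto
  then have s: "s > 0" using assms(2) by (meson less_le_trans zero_less_norm_iff)
  define c' where "c' l = (if l < k then c l / of_real s else 0)" for l
  have "(\<Sum>l<k. cmod (c' l)) = (\<Sum>l<k. cmod (c l) / s)"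
    using s by (intro sum.cong refl) (simp add: c'_def norm_divide)
  also have "\<dots> = 1" using s by (simp add: s_def flip: sum_divide_distrib)
  finally have "c' \<in> l1_sphere k" by (auto simp: l1_sphere_def c'_def)
  moreover have "c l = of_real s * c' l" if "l < k" for l
    using that s by (simp add: c'_def)
  ultimately show ?thesis using s by (intro exI[of _ "of_real s"]) auto
qed

lemma GL_l1_sphere_combination_nonzero:
  assumes g: "g \<in> GL n" and k: "k \<le> n" and c: "c \<in> l1_sphere k"
  shows "(\<lambda>i. \<Sum>l<k. c l * g i l) \<noteq> (\<lambda>i. 0)"
proof
  assume v0: "(\<lambda>i. \<Sum>l<k. c l * g i l) = (\<lambda>i. 0)"
  have sum_n: "(\<Sum>l<n. c l * g i l) = (\<Sum>l<k. c l * g i l)" for i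
    using k c by (intro sum.mono_neutral_right) (auto simp: l1_sphere_def)
  have "c l = 0" for l
    by (rule GL_combination_eq_0[OF g]) (use k c v0 sum_n in \<open>auto simp: l1_sphere_def fun_eq_iff\<close>)
  then show False using c by (simp add: l1_sphere_def)
qed

lemma low_combination_GL_iff:
  assumes g: "g \<in> GL n" and k: "k \<le> n"
  shows "g \<in> low_combination k m \<longleftrightarrow> (\<exists>v\<in>colspan n g k. v \<noteq> (\<lambda>i. 0) \<and> (\<forall>i<m. v i = 0))"
proof
  assume "g \<in> low_combination k m"
  then obtain c where "c \<in> l1_sphere k" "\<And>i. i < m \<Longrightarrow> (\<Sum>l<k. c l * g i l) = 0"
    by (auto simp: low_combination_def)
  then show "\<exists>v\<in>colspan n g k. v \<noteq> (\<lambda>i. 0) \<and> (\<forall>i<m. v i = 0)"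
    using GL_l1_sphere_combination_nonzero[OF g k] by (auto simp: colspan_def)
next
  assume "\<exists>v\<in>colspan n g k. v \<noteq> (\<lambda>i. 0) \<and> (\<forall>i<m. v i = 0)"
  then obtain c where v0: "(\<lambda>i. \<Sum>l<k. c l * g i l) \<noteq> (\<lambda>i. 0)"
    and vz: "\<And>i. i < m \<Longrightarrow> (\<Sum>l<k. c l * g i l) = 0"
    by (auto simp: colspan_def)
  then obtain l0 where "l0 < k" "c l0 \<noteq> 0"
    by (metis (no_types, lifting) mult_eq_0_iff sum.neutral lessThan_iff)
  then obtain s c' where s: "s \<noteq> 0" "c' \<in> l1_sphere k" "\<And>l. l < k \<Longrightarrow> c l = s * c' l"
    using l1_sphere_normalize by blast
  have "(\<Sum>l<k. c l * g i l) = s * (\<Sum>l<k. c' l * g i l)" for i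
    using s(3) by (simp add: sum_distrib_left mult.assoc)
  then have "(\<Sum>l<k. c' l * g i l) = 0" if "i < m" for i
    using vz[OF that] s(1) by simp
  then show "g \<in> low_combination k m" using s(2) by (auto simp: low_combination_def)
qed

definition meets_opposite :: "nat \<Rightarrow> (nat \<Rightarrow> nat) \<Rightarrow> (nat \<Rightarrow> cvec set) set" where
  "meets_opposite n w =
    {F \<in> Fl n. \<forall>j<n. \<exists>v\<in>F (Suc j). v \<noteq> (\<lambda>i. 0) \<and> (\<forall>i<w j. v i = 0)}"

lemma flag_of_meets_opposite_iff:
  assumes g: "g \<in> GL n"
  shows "flag_of n g \<in> meets_opposite n w \<longleftrightarrow> g \<in> (\<Inter>j<n. low_combination (Suc j) (w j))"
proof -
  have "flag_of n g (Suc j) = colspan n g (Suc j)" if "j < n" for j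
    using that by (simp add: flag_of_def)
  then show ?thesis
    using g flag_of_Fl[OF g] by (auto simp: meets_opposite_def low_combination_GL_iff Suc_le_eq)
qed

lemma dcoset_Blow_low_combination:
  assumes w_perm: "w permutes {..<n}" and g: "g \<in> dcoset n (Blow n) w"
  shows "g \<in> (\<Inter>j<n. low_combination (Suc j) (w j))"
proof -
  obtain b1 b2 where g_eq: "g = mmul n (mmul n b1 (permmat n w)) b2"
    and b1: "b1 \<in> Blow n" and b2: "b2 \<in> Bup n"
    using g by (auto simp: dcoset_def)
  have gGL: "g \<in> GL n"
    using b1 b2 w_perm by (auto simp: g_eq Blow_def Bup_def intro!: GL_mmul permmat_GL)
  have w: "w j < n" if "j < n" for j
    using that permutes_in_image[OF w_perm] by simp
  have "mcol b1 (w j) \<in> colspan n g (Suc j)" if j: "j < n" for j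
  proof -
    have "mvmul n (mmul n b1 (permmat n w)) (basis_vec j) = mcol b1 (w j)"
      using j w[OF j] GL_matrices[of b1 n] b1
      by (auto simp: mvmul_basis_vec mmul_permmat_right mcol_def Blow_def matrices_def)
    moreover have "mvmul n (mmul n b1 (permmat n w)) (basis_vec j) \<in> colspan n g (Suc j)"
      unfolding g_eq using b2 by (intro mvmul_colspan basis_vec_in_colspan_Bup j)
        (auto simp: Bup_def GL_matrices)
    ultimately show ?thesis by simp
  qed
  moreover have "mcol b1 (w j) \<noteq> (\<lambda>i. 0)" if "j < n" for j
    using b1 w[OF that] by (intro GL_mcol_nonzero) (auto simp: Blow_def)
  moreover have "mcol b1 (w j) i = 0" if "i < w j" for i j
    using b1 that by (auto simp: Blow_def mcol_def)
  ultimately have "\<exists>v\<in>colspan n g (Suc j). v \<noteq> (\<lambda>i. 0) \<and> (\<forall>i<w j. v i = 0)"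
    if "j < n" for j
    using that by blast
  then show ?thesis using low_combination_GL_iff[OF gGL] by (auto simp: Suc_le_eq)
qed

lemma dualSchubert_wJ_subset_meets_opposite: "dualSchubert n (wJ n J) \<subseteq> meets_opposite n (wJ n J)"
  unfolding dualSchubert_def
proof (rule closure_of_flags_subset)
  show "meets_opposite n (wJ n J) \<subseteq> Fl n" by (auto simp: meets_opposite_def)
  show "dcoset n (Blow n) (wJ n J) \<subseteq> GL n \<inter> (\<Inter>j<n. low_combination (Suc j) (wJ n J j))"
    using dcoset_GL[of "Blow n" n] permmat_wJ_GL dcoset_Blow_low_combination[OF wJ_permutes]
    by (auto simp: Blow_def)
qed (auto simp: flag_of_meets_opposite_iff intro!: closed_INT closed_low_combination)

lemma flag_of_std_at_cutsD:
  assumes "flag_of n g \<in> std_at_cuts n J" "c \<notin> J" "0 < c" "c < n" "v \<in> colspan n g c" "c \<le> i"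
  shows "v i = 0"
  using assms by (auto simp: std_at_cuts_def flag_of_def)

lemma flag_of_meets_oppositeD:
  assumes "flag_of n g \<in> meets_opposite n w" "j < n"
  obtains v where "v \<in> colspan n g (Suc j)" "v \<noteq> (\<lambda>i. 0)" "\<And>i. i < w j \<Longrightarrow> v i = 0"
  using assms by (auto simp: meets_opposite_def flag_of_def)

text \<open>At the start \<open>j\<close> of a block of \<open>w\<^sub>J\<close>, the vector of \<open>V\<^sub>j\<^sub>+\<^sub>1\<close> supported on coordinates
  \<open>\<ge> w\<^sub>J(j)\<close> is, by the cut after the block, supported on coordinate \<open>w\<^sub>J(j)\<close> alone.\<close>
lemma basis_vec_in_colspan_block_start:
  assumes g: "g \<in> GL n" and std: "flag_of n g \<in> std_at_cuts n J"
    and opp: "flag_of n g \<in> meets_opposite n (wJ n J)"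
    and j: "j < n" "block_start J j = j"
  shows "basis_vec (wJ n J j) \<in> colspan n g (Suc j)"
proof -
  let ?h = "block_end n J j"
  have wh: "wJ n J j = ?h" using wJ_block_start[OF j] .
  obtain v where v: "v \<in> colspan n g (Suc j)" "v \<noteq> (\<lambda>i. 0)" "\<And>i. i < ?h \<Longrightarrow> v i = 0"
    using flag_of_meets_oppositeD[OF opp j(1)] wh by metis
  have v_above: "v i = 0" if "?h < i" for i
  proof (cases "Suc ?h < n")
    case True
    have "v \<in> colspan n g (Suc ?h)"
      using v(1) colspan_mono[of "Suc j" "Suc ?h" n g] block_end_bounds(1)[OF j(1), of J] by auto
    then show ?thesis
      using flag_of_std_at_cutsD[OF std Suc_block_end_notin[OF j(1) True]] True that by simp
  next
    case False
    then show ?thesis using that colspan_outside[OF GL_matrices[OF g] v(1)] by simp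
  qed
  have v_eq: "v = (\<lambda>i. v ?h * basis_vec ?h i)"
    using v(3) v_above by (auto simp: basis_vec_def fun_eq_iff) (metis linorder_neqE_nat)
  then have "v ?h \<noteq> 0" using v(2) by auto
  moreover have "(\<lambda>i. (1 / v ?h) * v i) \<in> colspan n g (Suc j)" by (rule colspan_scale[OF v(1)])
  ultimately show ?thesis using wh by (subst (asm) v_eq) (simp add: fun_eq_iff basis_vec_def)
qed

text \<open>Inside a block \<open>w\<^sub>J(j - 1) = w\<^sub>J(j) + 1\<close>, so \<open>N\<close> moves the unit vector of \<open>V\<^sub>j\<close> to
  the one required in \<open>V\<^sub>j\<^sub>+\<^sub>1\<close>.\<close>
lemma basis_vec_wJ_in_colspan:
  assumes g: "g \<in> GL n" and std: "flag_of n g \<in> std_at_cuts n J"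
    and opp: "flag_of n g \<in> meets_opposite n (wJ n J)" and pet: "flag_of n g \<in> Pet n"
    and j: "j < n"
  shows "basis_vec (wJ n J j) \<in> colspan n g (Suc j)"
  using j
proof (induction j rule: less_induct)
  case (less j)
  show ?case
  proof (cases "block_start J j = j")
    case True
    then show ?thesis by (rule basis_vec_in_colspan_block_start[OF g std opp less.prems])
  next
    case False
    note inner = wJ_not_block_start[OF less.prems False]
    have IH: "basis_vec (wJ n J (j - 1)) \<in> colspan n g j"
      using less.IH[of "j - 1"] inner(2) less.prems by simp
    have "j \<in> {1..n-1}" using inner(2) less.prems by simp
    then have "Nop n ` flag_of n g j \<subseteq> flag_of n g (Suc j)"
      using pet unfolding Pet_def by blast
    then have "Nop n ` colspan n g j \<subseteq> colspan n g (Suc j)"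
      using less.prems by (simp add: flag_of_def)
    moreover have "Nop n (basis_vec (wJ n J (j - 1))) = basis_vec (wJ n J j)"
      using Nop_basis_vec[OF wJ_less[of "j - 1" n J]] inner(3) less.prems by simp
    ultimately show ?thesis using imageI[OF IH, of "Nop n"] by auto
  qed
qed

lemma std_at_cuts_meets_opposite_Pet_eq:
  assumes std: "F \<in> std_at_cuts n J" and opp: "F \<in> meets_opposite n (wJ n J)" and pet: "F \<in> Pet n"
  shows "F = perm_flag n (wJ n J)"
proof -
  obtain g where g: "g \<in> GL n" "F = flag_of n g" using std by (auto simp: std_at_cuts_def Fl_def)
  have span_eq: "colspan n (permmat n (wJ n J)) k = colspan n g k" if k: "k \<le> n" for k
  proof (rule GL_colspan_eq[OF permmat_wJ_GL k], rule colspan_subsetI)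
    fix j assume "j < k"
    then have "mcol (permmat n (wJ n J)) j = basis_vec (wJ n J j)" "Suc j \<le> k" "j < n"
      using k wJ_less[of j n J] by (auto simp: mcol_permmat)
    then show "mcol (permmat n (wJ n J)) j \<in> colspan n g k"
      using basis_vec_wJ_in_colspan[OF g(1)] std opp pet g(2) colspan_mono by fastforce
  qed
  show ?thesis unfolding g(2) perm_flag_def flag_of_def by (intro ext) (simp add: span_eq)
qed

text \<open>For \<open>k \<in> J' - J\<close>, some \<open>V\<^sub>l\<^sub>+\<^sub>1\<close> with \<open>l < k\<close> must contain a nonzero vector supported
  on coordinates \<open>\<ge> k\<close>, while \<open>V\<^sub>l\<^sub>+\<^sub>1 \<subseteq> V\<^sub>k\<close> is supported on coordinates \<open>< k\<close>.\<close>
lemma std_at_cuts_meets_opposite_imp_subset: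
  assumes std: "F \<in> std_at_cuts n J" and opp: "F \<in> meets_opposite n (wJ n J')"
    and J': "J' \<subseteq> {1..n-1}"
  shows "J' \<subseteq> J"
proof
  fix k assume kJ': "k \<in> J'"
  show "k \<in> J"
  proof (rule ccontr)
    assume kJ: "k \<notin> J"
    have "k \<in> {1..n-1}" using kJ' J' by blast
    then have k: "0 < k" "k < n" by auto
    obtain l where l: "l < k" "k \<le> wJ n J' l" using wJ_crosses_cut[OF kJ' k] by blast
    obtain g where g: "F = flag_of n g" using std by (auto simp: std_at_cuts_def Fl_def)
    obtain v where v: "v \<in> colspan n g (Suc l)" "v \<noteq> (\<lambda>i. 0)" "\<And>i. i < wJ n J' l \<Longrightarrow> v i = 0"
      using flag_of_meets_oppositeD[OF opp[unfolded g]] l k by (metis order.strict_trans)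
    have "v \<in> colspan n g k" using v(1) colspan_mono[of "Suc l" k] l(1) by auto
    then have "v i = 0" if "k \<le> i" for i
      using flag_of_std_at_cutsD[OF std[unfolded g] kJ k] that by blast
    then have "v = (\<lambda>i. 0)" using v(3) l(2) by (metis leI order.strict_trans2)
    then show False using v(2) by simp
  qed
qed

lemma continuous_on_mmul_both: "continuous_on UNIV (\<lambda>x. mmul n b1 (mmul n x b2))"
proof (intro continuous_on_coordinatewise_then_product)
  fix i j
  show "continuous_on UNIV (\<lambda>x. mmul n b1 (mmul n x b2) i j)"
  proof (cases "i < n \<and> j < n")
    case True
    then have eq: "(\<lambda>x. mmul n b1 (mmul n x b2) i j) = (\<lambda>x. \<Sum>k<n. b1 i k * (\<Sum>l<n. x k l * b2 l j))"
      by (auto simp: mmul_def fun_eq_iff intro!: sum.cong)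
    show ?thesis unfolding eq by (intro continuous_intros continuous_on_entry)
  next
    case False
    then have eq: "(\<lambda>x. mmul n b1 (mmul n x b2) i j) = (\<lambda>x. 0)" by (auto simp: mmul_def)
    show ?thesis unfolding eq by (rule continuous_on_const)
  qed
qed

lemma closure_dcoset_mono:
  assumes "permmat n u' \<in> closure (dcoset n (Bup n) u)"
  shows "closure (dcoset n (Bup n) u') \<subseteq> closure (dcoset n (Bup n) u)"
proof (rule closure_minimal[OF _ closed_closure], rule subsetI)
  fix h assume "h \<in> dcoset n (Bup n) u'"
  then obtain b1 b2 where h: "h = mmul n (mmul n b1 (permmat n u')) b2" "b1 \<in> Bup n" "b2 \<in> Bup n"
    by (auto simp: dcoset_def)
  let ?psi = "\<lambda>x. mmul n b1 (mmul n x b2)"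
  have "?psi x \<in> dcoset n (Bup n) u" if "x \<in> dcoset n (Bup n) u" for x
    using dcoset_mmul_left[OF dcoset_mmul_right[OF that h(3)] h(2) Bup_mmul] .
  then have "?psi ` dcoset n (Bup n) u \<subseteq> dcoset n (Bup n) u" by blast
  then have "?psi ` closure (dcoset n (Bup n) u) \<subseteq> closure (dcoset n (Bup n) u)"
    using closure_subset
    by (intro image_closure_subset continuous_on_subset[OF continuous_on_mmul_both]) auto
  then have "?psi (permmat n u') \<in> closure (dcoset n (Bup n) u)" using assms by blast
  then show "h \<in> closure (dcoset n (Bup n) u)" by (simp add: h mmul_assoc)
qed

lemma continuous_punctured_in_closure:
  fixes f :: "complex \<Rightarrow> 'a::topological_space"
  assumes "continuous_on UNIV f" "\<And>s. s \<noteq> 0 \<Longrightarrow> f s \<in> S"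
  shows "f 0 \<in> closure S"
proof -
  have "0 \<in> closure (UNIV - {0::complex})"
    using islimpt_punctured[of "0::complex" UNIV] islimpt_UNIV[of "0::complex"]
    by (simp add: closure_def)
  moreover have "f ` closure (UNIV - {0}) \<subseteq> closure S"
    using assms closure_subset
    by (intro image_closure_subset continuous_on_subset[OF assms(1)]) auto
  ultimately show ?thesis by blast
qed

definition transvection :: "nat \<Rightarrow> nat \<Rightarrow> nat \<Rightarrow> complex \<Rightarrow> cmat" where
  "transvection n r r' a = (\<lambda>i j.
    if i < n \<and> j < n then (if i = j then 1 else 0) + (if i = r \<and> j = r' then a else 0) else 0)"

definition diag_scale :: "nat \<Rightarrow> nat \<Rightarrow> complex \<Rightarrow> cmat" where
  "diag_scale n c a = (\<lambda>i j. if i < n \<and> j < n \<and> i = j then (if i = c then a else 1) else 0)"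

lemma transvection_mmul:
  assumes A: "A \<in> matrices n" and r: "r < n" "r' < n"
  shows "mmul n (transvection n r r' a) A = (\<lambda>i j. A i j + (if i = r then a * A r' j else 0))"
proof (intro ext)
  fix i j
  show "mmul n (transvection n r r' a) A i j = A i j + (if i = r then a * A r' j else 0)"
  proof (cases "i < n \<and> j < n")
    case True
    have "(\<Sum>k<n. transvection n r r' a i k * A k j) =
        (\<Sum>k<n. (if k = i then A k j else 0) + (if i = r \<and> k = r' then a * A k j else 0))"
      using True by (intro sum.cong refl) (auto simp: transvection_def algebra_simps)
    then show ?thesis using True r by (simp add: mmul_def sum.distrib)
  qed (use A r in \<open>auto simp: mmul_def matrices_def\<close>)
qed

lemma mmul_transvection:
  assumes A: "A \<in> matrices n" and r: "r < n" "r' < n"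
  shows "mmul n A (transvection n r r' a) = (\<lambda>i j. A i j + (if j = r' then a * A i r else 0))"
proof (intro ext)
  fix i j
  show "mmul n A (transvection n r r' a) i j = A i j + (if j = r' then a * A i r else 0)"
  proof (cases "i < n \<and> j < n")
    case True
    have "(\<Sum>k<n. A i k * transvection n r r' a k j) =
        (\<Sum>k<n. (if k = j then A i k else 0) + (if k = r \<and> j = r' then a * A i k else 0))"
      using True by (intro sum.cong refl) (auto simp: transvection_def algebra_simps)
    then show ?thesis using True r by (simp add: mmul_def sum.distrib)
  qed (use A r in \<open>auto simp: mmul_def matrices_def\<close>)
qed

lemma mmul_diag_scale:
  assumes A: "A \<in> matrices n"
  shows "mmul n A (diag_scale n c a) = (\<lambda>i j. A i j * (if j = c then a else 1))"
proof (intro ext)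
  fix i j
  show "mmul n A (diag_scale n c a) i j = A i j * (if j = c then a else 1)"
  proof (cases "i < n \<and> j < n")
    case True
    have "(\<Sum>k<n. A i k * diag_scale n c a k j) =
        (\<Sum>k<n. if k = j then A i j * (if j = c then a else 1) else 0)"
      using True by (intro sum.cong refl) (auto simp: diag_scale_def)
    then show ?thesis using True by (simp add: mmul_def)
  qed (use A in \<open>auto simp: mmul_def matrices_def\<close>)
qed

lemma transvection_matrices [simp]: "transvection n r r' a \<in> matrices n"
  by (simp add: transvection_def matrices_def)

lemma diag_scale_matrices [simp]: "diag_scale n c a \<in> matrices n"
  by (simp add: diag_scale_def matrices_def)

lemma transvection_Bup:
  assumes "r < r'" "r' < n"
  shows "transvection n r r' a \<in> Bup n"
proof -
  have "mmul n (transvection n r r' b) (transvection n r r' (- b)) = idm n" for b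
    using assms by (simp add: transvection_mmul) (auto simp: transvection_def idm_def fun_eq_iff)
  from this[of a] this[of "- a"] have "transvection n r r' a \<in> GL n"
    unfolding GL_def by (auto intro!: bexI[of _ "transvection n r r' (- a)"])
  then show ?thesis using assms by (auto simp: Bup_def transvection_def)
qed

lemma diag_scale_Bup:
  assumes "a \<noteq> 0"
  shows "diag_scale n c a \<in> Bup n"
proof -
  have "mmul n (diag_scale n c b) (diag_scale n c (1 / b)) = idm n" if "b \<noteq> 0" for b
    using that by (simp add: mmul_diag_scale) (auto simp: diag_scale_def idm_def fun_eq_iff)
  from this[of a] this[of "1 / a"] have "diag_scale n c a \<in> GL n"
    using assms unfolding GL_def by (auto intro!: bexI[of _ "diag_scale n c (1 / a)"])
  then show ?thesis by (auto simp: Bup_def diag_scale_def)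
qed

text \<open>Starting from \<open>P\<^sub>u\<close>, add \<open>1/s\<close> times row \<open>u(i)\<close> to the higher row \<open>u(i+1)\<close>, scale
  column \<open>i\<close> by \<open>s\<close>, subtract it from column \<open>i+1\<close> and scale that by \<open>-1/s\<close>: the result is
  \<open>P\<^sub>u\<^sub>\<sigma> + s E\<^sub>u\<^sub>(\<^sub>i\<^sub>)\<^sub>,\<^sub>i\<close>, which tends to \<open>P\<^sub>u\<^sub>\<sigma>\<close> as \<open>s \<rightarrow> 0\<close>.\<close>
lemma swap_path_factorization:
  assumes u: "u permutes {..<n}" and i: "Suc i < n" and s: "s \<noteq> 0"
  shows "mmul n (mmul n (mmul n (mmul n (transvection n (u (Suc i)) (u i) (1 / s)) (permmat n u))
      (diag_scale n i s)) (transvection n i (Suc i) (- 1))) (diag_scale n (Suc i) (- 1 / s))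
    = (\<lambda>a b. permmat n (u \<circ> Transposition.transpose i (Suc i)) a b
      + s * (if a = u i \<and> b = i then 1 else 0))"
proof -
  have u_less: "u k < n" if "k < n" for k using u that permutes_in_image by fastforce
  have u_eq: "u a = u b \<longleftrightarrow> a = b" for a b using permutes_inj[OF u] by (auto dest: injD)
  let ?P = "permmat n u"
  let ?T = "transvection n (u (Suc i)) (u i) (1 / s)"
  let ?X = "\<lambda>a b. (?P a b + (if a = u (Suc i) then 1 / s * ?P (u i) b else 0))
    * (if b = i then s else 1)"
  let ?Y = "\<lambda>a b. ?X a b + (if b = Suc i then - 1 * ?X a i else 0)"
  have "mmul n ?T ?P = (\<lambda>a b. ?P a b + (if a = u (Suc i) then 1 / s * ?P (u i) b else 0))"
    using i u_less by (intro transvection_mmul) auto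
  then have X: "mmul n (mmul n ?T ?P) (diag_scale n i s) = ?X"
    using mmul_diag_scale[OF mmul_matrices[of n ?T ?P], of i s] by simp
  have Y: "mmul n (mmul n (mmul n ?T ?P) (diag_scale n i s)) (transvection n i (Suc i) (- 1)) = ?Y"
    using i mmul_transvection[OF mmul_matrices[of n "mmul n ?T ?P" "diag_scale n i s"],
        of i "Suc i" "- 1"]
    unfolding X by simp
  have "mmul n (mmul n (mmul n (mmul n ?T ?P) (diag_scale n i s)) (transvection n i (Suc i) (- 1)))
      (diag_scale n (Suc i) (- 1 / s)) =
    (\<lambda>a b. ((?P a b + (if a = u (Suc i) then 1 / s * ?P (u i) b else 0)) * (if b = i then s else 1)
      + (if b = Suc i then - 1 * ((?P a i + (if a = u (Suc i) then 1 / s * ?P (u i) i else 0)) * s)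
         else 0)) * (if b = Suc i then - 1 / s else 1))" (is "_ = ?L")
    by (subst mmul_diag_scale[of "mmul n (mmul n (mmul n ?T ?P) (diag_scale n i s))
        (transvection n i (Suc i) (- 1))"]) (rule mmul_matrices, simp add: Y)
  also have "?L = (\<lambda>a b. permmat n (u \<circ> Transposition.transpose i (Suc i)) a b
      + s * (if a = u i \<and> b = i then 1 else 0))" (is "_ = ?R")
  proof (intro ext)
    fix a b
    have "u i \<noteq> u (Suc i)" "u i < n" "u (Suc i) < n"
      using i u_less[of i] u_less[of "Suc i"] u_eq[of i "Suc i"] by auto
    consider "b = i" | "b = Suc i" | "b \<noteq> i" "b \<noteq> Suc i" by blast
    then show "?L a b = ?R a b"
      by cases (use i s \<open>u i \<noteq> u (Suc i)\<close> \<open>u i < n\<close> \<open>u (Suc i) < n\<close> in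
          \<open>auto simp: permmat_def Transposition.transpose_def u_eq field_simps\<close>)
  qed
  finally show ?thesis .
qed

lemma swap_path_in_dcoset:
  assumes u: "u permutes {..<n}" and i: "Suc i < n" "u (Suc i) < u i" and s: "s \<noteq> 0"
  shows "(\<lambda>a b. permmat n (u \<circ> Transposition.transpose i (Suc i)) a b
      + s * (if a = u i \<and> b = i then 1 else 0)) \<in> dcoset n (Bup n) u"
proof -
  have u_less: "u k < n" if "k < n" for k using u that permutes_in_image by fastforce
  let ?P = "permmat n u"
  let ?T = "transvection n (u (Suc i)) (u i) (1 / s)"
  have "mmul n ?T ?P \<in> dcoset n (Bup n) u"
    using i u_less by (intro dcoset_mmul_left[OF permmat_in_dcoset transvection_Bup] Bup_mmul) auto
  then have "mmul n (mmul n ?T ?P) (diag_scale n i s) \<in> dcoset n (Bup n) u"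
    by (rule dcoset_mmul_right[OF _ diag_scale_Bup[OF s]])
  then have "mmul n (mmul n (mmul n ?T ?P) (diag_scale n i s)) (transvection n i (Suc i) (- 1))
      \<in> dcoset n (Bup n) u"
    by (rule dcoset_mmul_right[OF _ transvection_Bup]) (use i in auto)
  then have "mmul n (mmul n (mmul n (mmul n ?T ?P) (diag_scale n i s)) (transvection n i (Suc i) (- 1)))
      (diag_scale n (Suc i) (- 1 / s)) \<in> dcoset n (Bup n) u"
    by (rule dcoset_mmul_right[OF _ diag_scale_Bup]) (use s in auto)
  then show ?thesis using swap_path_factorization[OF u i(1) s] by simp
qed

lemma permmat_swap_in_closure:
  assumes u: "u permutes {..<n}" and i: "Suc i < n" "u (Suc i) < u i"
  shows "permmat n (u \<circ> Transposition.transpose i (Suc i)) \<in> closure (dcoset n (Bup n) u)"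
proof -
  let ?path = "\<lambda>s a b. permmat n (u \<circ> Transposition.transpose i (Suc i)) a b
    + s * (if a = u i \<and> b = i then 1 else 0)"
  have "continuous_on UNIV ?path"
    by (intro continuous_on_coordinatewise_then_product continuous_intros)
  then have "?path 0 \<in> closure (dcoset n (Bup n) u)"
    using swap_path_in_dcoset[OF u i] by (rule continuous_punctured_in_closure)
  then show ?thesis by simp
qed

definition inversions :: "nat \<Rightarrow> (nat \<Rightarrow> nat) \<Rightarrow> (nat \<times> nat) set" where
  "inversions n f = {(p, q). p < q \<and> q < n \<and> f q < f p}"

lemma finite_inversions: "finite (inversions n f)"
  by (rule finite_subset[of _ "{..<n} \<times> {..<n}"]) (auto simp: inversions_def)

lemma inversions_empty_imp_id:
  assumes f: "f permutes {..<n}" and "inversions n f = {}"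
  shows "f = id"
proof (rule permutes_natset_ge[OF f], intro ballI)
  have mono: "f p < f q" if "p < q" "q < n" for p q
  proof -
    have "\<not> f q < f p" using assms(2) that by (auto simp: inversions_def)
    moreover have "f p \<noteq> f q" using inj_eq[OF permutes_inj[OF f]] that by simp
    ultimately show ?thesis by simp
  qed
  show "i \<le> f i" if "i \<in> {..<n}" for i
    using that
  proof (induction i)
    case (Suc i)
    then show ?case using mono[of i "Suc i"] by simp
  qed simp
qed

lemma adjacent_inversion:
  assumes f: "f permutes {..<n}" and "inversions n f \<noteq> {}"
  shows "\<exists>i. Suc i < n \<and> f (Suc i) < f i"
proof (rule ccontr)
  assume "\<not> ?thesis"
  then have step: "f i < f (Suc i)" if "Suc i < n" for i
    using that inj_eq[OF permutes_inj[OF f], of i "Suc i"] by auto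
  have "f p < f q" if "p < q" "q < n" for p q
    using that
  proof (induction q)
    case (Suc q)
    then show ?case using step[of q] by (cases "p = q") auto
  qed simp
  then show False using assms(2) by (auto simp: inversions_def dest: less_asym)
qed

lemma inversions_compose_transpose:
  assumes i: "Suc i < n" "f (Suc i) < f i"
    and pq: "(p, q) \<in> inversions n (f \<circ> Transposition.transpose i (Suc i))"
  shows "(Transposition.transpose i (Suc i) p, Transposition.transpose i (Suc i) q)
    \<in> inversions n f - {(i, Suc i)}"
  using assms by (auto simp: inversions_def Transposition.transpose_def split: if_splits)

lemma card_inversions_compose_transpose:
  assumes i: "Suc i < n" "f (Suc i) < f i"
  shows "card (inversions n (f \<circ> Transposition.transpose i (Suc i))) < card (inversions n f)"
proof -
  let ?\<tau> = "Transposition.transpose i (Suc i)"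
  have "inversions n (f \<circ> ?\<tau>) \<subseteq> (\<lambda>(p, q). (?\<tau> p, ?\<tau> q)) ` (inversions n f - {(i, Suc i)})"
  proof
    fix x assume x: "x \<in> inversions n (f \<circ> ?\<tau>)"
    obtain p q where "x = (p, q)" by (cases x)
    then show "x \<in> (\<lambda>(p, q). (?\<tau> p, ?\<tau> q)) ` (inversions n f - {(i, Suc i)})"
      using inversions_compose_transpose[OF i] x
      by (auto intro!: image_eqI[of _ _ "(?\<tau> p, ?\<tau> q)"])
  qed
  then have "card (inversions n (f \<circ> ?\<tau>)) \<le> card (inversions n f - {(i, Suc i)})"
    by (meson card_image_le card_mono finite_Diff finite_imageI finite_inversions le_trans)
  also have "\<dots> < card (inversions n f)"
    using i by (intro card_Diff1_less finite_inversions) (auto simp: inversions_def)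
  finally show ?thesis .
qed

text \<open>Every inversion of \<open>v \<circ> u\<close> is one of \<open>u\<close>, so \<open>u\<close> is turned into \<open>v\<close> by removing adjacent
  inversions of \<open>v \<circ> u\<close> one at a time, each step staying inside the closure.\<close>
lemma permmat_in_closure_dcoset:
  assumes v: "v permutes {..<n}" "\<And>x. v (v x) = x" and u: "u permutes {..<n}"
    and H: "\<And>p q. p < q \<Longrightarrow> q < n \<Longrightarrow> v (u q) < v (u p) \<Longrightarrow> u q < u p"
  shows "permmat n v \<in> closure (dcoset n (Bup n) u)"
  using u H
proof (induction "card (inversions n (v \<circ> u))" arbitrary: u rule: less_induct)
  case (less u)
  have vu: "v \<circ> u permutes {..<n}" by (rule permutes_compose[OF less.prems(1) v(1)])
  show ?case
  proof (cases "inversions n (v \<circ> u) = {}")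
    case True
    then have "u = v" using inversions_empty_imp_id[OF vu] v(2) by (metis comp_apply id_apply ext)
    then show ?thesis using permmat_in_dcoset[of n "Bup n" u] closure_subset by auto
  next
    case False
    let ?\<tau> = "Transposition.transpose"
    obtain i where i: "Suc i < n" "(v \<circ> u) (Suc i) < (v \<circ> u) i"
      using adjacent_inversion[OF vu False] by blast
    have desc: "u (Suc i) < u i" using less.prems(2)[of i "Suc i"] i by simp
    have u': "u \<circ> ?\<tau> i (Suc i) permutes {..<n}"
      using i by (intro permutes_compose[OF _ less.prems(1)] permutes_swap_id) auto
    have H': "(u \<circ> ?\<tau> i (Suc i)) q < (u \<circ> ?\<tau> i (Suc i)) p"
      if "p < q" "q < n" "v ((u \<circ> ?\<tau> i (Suc i)) q) < v ((u \<circ> ?\<tau> i (Suc i)) p)" for p q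
      using inversions_compose_transpose[OF i, of p q] that less.prems(2)
      by (auto simp: inversions_def)
    have "card (inversions n (v \<circ> (u \<circ> ?\<tau> i (Suc i)))) < card (inversions n (v \<circ> u))"
      using card_inversions_compose_transpose[OF i] by (simp only: comp_assoc)
    then have "permmat n v \<in> closure (dcoset n (Bup n) (u \<circ> ?\<tau> i (Suc i)))"
      using less.hyps u' H' by blast
    also have "\<dots> \<subseteq> closure (dcoset n (Bup n) u)"
      by (rule closure_dcoset_mono[OF permmat_swap_in_closure[OF less.prems(1) i(1) desc]])
    finally show ?thesis .
  qed
qed

lemma perm_flag_in_closure_of:
  assumes "idm n \<in> H" "permmat n w \<in> GL n"
  shows "perm_flag n w \<in> flag_top n closure_of (flag_of n ` dcoset n H w)"
  using closure_of_subset_Int[of "flag_top n" "flag_of n ` dcoset n H w"]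
    permmat_in_dcoset[OF assms(1)] flag_of_Fl[OF assms(2)]
  by (auto simp: topspace_flag_top perm_flag_def)

lemma perm_flag_wJ_in_Schubert:
  assumes "J' \<subseteq> J"
  shows "perm_flag n (wJ n J') \<in> Schubert n (wJ n J)"
proof -
  let ?u = "wJ n J" and ?v = "wJ n J'"
  have "?u q < ?u p" if pq: "p < q" "q < n" "?v (?u q) < ?v (?u p)" for p q
  proof (rule ccontr)
    assume "\<not> ?u q < ?u p"
    moreover have "?u q \<noteq> ?u p" using pq(1) by (metis wJ_wJ less_irrefl)
    ultimately have lt: "?u p < ?u q" by simp
    have "{?u p<..?u q} \<subseteq> J'"
      using wJ_inversion_iff[OF lt wJ_less[OF pq(2)]] pq(3) by blast
    then have "?u (?u q) < ?u (?u p)"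
      using wJ_inversion_iff[OF lt wJ_less[OF pq(2)]] assms by blast
    then show False using pq(1) by (simp add: wJ_wJ)
  qed
  then have "permmat n ?v \<in> closure (dcoset n (Bup n) ?u)"
    by (intro permmat_in_closure_dcoset wJ_permutes wJ_wJ)
  moreover have "dcoset n (Bup n) ?u \<subseteq> GL n"
    using dcoset_GL[of "Bup n" n] permmat_wJ_GL by (auto simp: Bup_def)
  ultimately have "permmat n ?v \<in> top_of_set (GL n) closure_of dcoset n (Bup n) ?u"
    using permmat_wJ_GL[of n J'] by (simp add: closure_of_subtopology Int_absorb1)
  then have "flag_of n (permmat n ?v) \<in> flag_top n closure_of (flag_of n ` dcoset n (Bup n) ?u)"
    using continuous_map_image_closure_subset[OF continuous_map_flag_of] by blast
  then show ?thesis by (simp add: Schubert_def perm_flag_def)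
qed

lemma XJ_inter_OmegaJ_subset:
  "XJ n J \<inter> OmegaJ n J' \<subseteq> std_at_cuts n J \<inter> meets_opposite n (wJ n J') \<inter> Pet n"
  using Schubert_wJ_subset_std_at_cuts[of n J] dualSchubert_wJ_subset_meets_opposite[of n J']
  by (auto simp: XJ_def OmegaJ_def)

lemma perm_flag_wJ_in_XJ_inter_OmegaJ:
  assumes "J' \<subseteq> J"
  shows "perm_flag n (wJ n J') \<in> XJ n J \<inter> OmegaJ n J'"
  using perm_flag_wJ_in_Schubert[OF assms] perm_flag_wJ_Pet
    perm_flag_in_closure_of[OF idm_Blow permmat_wJ_GL]
  by (auto simp: XJ_def OmegaJ_def dualSchubert_def perm_flag_def)

theorem proposition3p2:
  fixes n :: nat and J J' :: "nat set"
  assumes "2 \<le> n" and "J \<subseteq> {1..n-1}" and "J' \<subseteq> {1..n-1}"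
  shows "(XJ n J \<inter> OmegaJ n J' \<noteq> {} \<longleftrightarrow> J' \<subseteq> J)
         \<and> XJ n J \<inter> OmegaJ n J = {perm_flag n (wJ n J)}"
proof (intro conjI iffI)
  assume "XJ n J \<inter> OmegaJ n J' \<noteq> {}"
  then show "J' \<subseteq> J"
    using XJ_inter_OmegaJ_subset std_at_cuts_meets_opposite_imp_subset[OF _ _ assms(3)] by blast
next
  show "J' \<subseteq> J \<Longrightarrow> XJ n J \<inter> OmegaJ n J' \<noteq> {}"
    using perm_flag_wJ_in_XJ_inter_OmegaJ by blast
next
  show "XJ n J \<inter> OmegaJ n J = {perm_flag n (wJ n J)}"
    using XJ_inter_OmegaJ_subset[of n J J] std_at_cuts_meets_opposite_Pet_eq
      perm_flag_wJ_in_XJ_inter_OmegaJ[of J J n] by blast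
qed

end
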